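(* Let $p$ be a prime and $G$ an extraspecial $p$-group. Then the only subsets of $G$ of the form $w(G)$ with $d\ge1$ and $w\in F_d$ are $\{1\}$, $Z(G)$ and $G$.
   Context: A special $p$-group is a finite $p$-group whose center, derived subgroup and Frattini subgroup coincide and are elementary abelian; it is extraspecial if $|Z(G)|=p$. $F_d$ is the free group on $d$ letters and $w(G)$ is the image of the word map $G^d\to G$ given by evaluating $w$. *)

theory Defs
  imports "HOL-Algebra.Algebra"
begin

definition group_center :: "('a, 'b) monoid_scheme \<Rightarrow> 'a set" where
  "group_center G = {z \<in> carrier G. \<forall>g \<in> carrier G. z \<otimes>\<^bsub>G\<^esub> g = g \<otimes>\<^bsub>G\<^esub> z}"

definition maximal_subgroup :: "('a, 'b) monoid_scheme \<Rightarrow> 'a set \<Rightarrow> bool" where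
  "maximal_subgroup G M \<longleftrightarrow> subgroup M G \<and> M \<noteq> carrier G \<and>
     (\<forall>H. subgroup H G \<and> M \<subseteq> H \<longrightarrow> H = M \<or> H = carrier G)"

definition frattini :: "('a, 'b) monoid_scheme \<Rightarrow> 'a set" where
  "frattini G = {x \<in> carrier G. \<forall>M. maximal_subgroup G M \<longrightarrow> x \<in> M}"

definition p_group :: "nat \<Rightarrow> ('a, 'b) monoid_scheme \<Rightarrow> bool" where
  "p_group p G \<longleftrightarrow> finite (carrier G) \<and> (\<exists>n. order G = p ^ n)"

definition elementary_abelian :: "nat \<Rightarrow> ('a, 'b) monoid_scheme \<Rightarrow> 'a set \<Rightarrow> bool" where
  "elementary_abelian p G H \<longleftrightarrow> subgroup H G \<and>
     (\<forall>x \<in> H. \<forall>y \<in> H. x \<otimes>\<^bsub>G\<^esub> y = y \<otimes>\<^bsub>G\<^esub> x) \<and>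
     (\<forall>x \<in> H. x [^]\<^bsub>G\<^esub> p = \<one>\<^bsub>G\<^esub>)"

definition special_p_group :: "nat \<Rightarrow> ('a, 'b) monoid_scheme \<Rightarrow> bool" where
  "special_p_group p G \<longleftrightarrow> p_group p G \<and>
     group_center G = derived G (carrier G) \<and>
     derived G (carrier G) = frattini G \<and>
     elementary_abelian p G (group_center G)"

definition extraspecial_p_group :: "nat \<Rightarrow> ('a, 'b) monoid_scheme \<Rightarrow> bool" where
  "extraspecial_p_group p G \<longleftrightarrow> special_p_group p G \<and> card (group_center G) = p"

text \<open>Elements of the free group F_d are represented by (not necessarily reduced) words
  in the letters x_0,...,x_{d-1} and their inverses: a pair (i, True) is x_i, (i, False) is x_i^{-1}.\<close>
type_synonym word = "(nat \<times> bool) list"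

definition free_words :: "nat \<Rightarrow> word set" where
  "free_words d = {w. \<forall>(i, b) \<in> set w. i < d}"

fun word_eval :: "('a, 'b) monoid_scheme \<Rightarrow> (nat \<Rightarrow> 'a) \<Rightarrow> word \<Rightarrow> 'a" where
  "word_eval G g [] = \<one>\<^bsub>G\<^esub>"
| "word_eval G g ((i, b) # w) =
     (if b then g i else inv\<^bsub>G\<^esub> (g i)) \<otimes>\<^bsub>G\<^esub> word_eval G g w"

definition word_image :: "('a, 'b) monoid_scheme \<Rightarrow> nat \<Rightarrow> word \<Rightarrow> 'a set" where
  "word_image G d w = {word_eval G g w | g. g \<in> {..<d} \<rightarrow>\<^sub>E carrier G}"

end

theory Submission
  imports Defs
begin

text \<open>Write \<open>e_i(w)\<close> for the exponent sum of the letter \<open>x_i\<close> in \<open>w\<close>. If \<open>p\<close> does not divide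
  some \<open>e_i(w)\<close>, then setting the other letters to \<open>1\<close> turns \<open>w\<close> into the power map \<open>x \<mapsto> x^e_i(w)\<close>,
  a bijection of the \<open>p\<close>-group \<open>G\<close>, so \<open>w(G) = G\<close>. Otherwise, as commutators and \<open>p\<close>-th powers lie in
  \<open>Z = Z(G) = G' = \<Phi>(G)\<close> of order \<open>p\<close>, the word as a function of one letter \<open>x\<close>, the others fixed,
  is \<open>x \<mapsto> U x^e [x, T]\<close> with \<open>U \<in> Z\<close> and \<open>x \<mapsto> x^e [x, T]\<close> a homomorphism into \<open>Z\<close>. Hence
  \<open>w(G) \<subseteq> Z\<close>, and since \<open>Z\<close> has prime order each such one-letter section is either constant or
  sweeps out all of \<open>U Z = Z\<close>. Changing the letters one at a time from \<open>1\<close> to an assignment where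
  \<open>w \<noteq> 1\<close> produces a non-constant section, so \<open>w(G)\<close> is \<open>{1}\<close> or \<open>Z\<close>. All three sets occur: the
  empty word gives \<open>{1}\<close>, the word \<open>x_0\<close> gives \<open>G\<close>, and the commutator word gives \<open>Z\<close> because
  \<open>G\<close> is non-abelian.\<close>

fun exponent_sum :: "nat \<Rightarrow> word \<Rightarrow> int" where
  "exponent_sum i [] = 0"
| "exponent_sum i ((j, b) # w) = (if j = i then (if b then 1 else -1) else 0) + exponent_sum i w"

definition word_range :: "('a, 'b) monoid_scheme \<Rightarrow> word \<Rightarrow> 'a set" where
  "word_range G w = {word_eval G g w | g. \<forall>j. g j \<in> carrier G}"

definition commutator :: "('a, 'b) monoid_scheme \<Rightarrow> 'a \<Rightarrow> 'a \<Rightarrow> 'a" where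
  "commutator G x y = inv\<^bsub>G\<^esub> x \<otimes>\<^bsub>G\<^esub> inv\<^bsub>G\<^esub> y \<otimes>\<^bsub>G\<^esub> x \<otimes>\<^bsub>G\<^esub> y"

definition commutator_word :: word where
  "commutator_word = [(0, False), (1, False), (0, True), (1, True)]"

lemma word_eval_cong:
  "(\<And>j b. (j, b) \<in> set w \<Longrightarrow> g j = g' j) \<Longrightarrow> word_eval G g w = word_eval G g' w"
  by (induction w) fastforce+

lemma coprime_prime_power_if_not_dvd:
  assumes "Factorial_Ring.prime p" and "\<not> int p dvd e"
  shows "coprime e (int (p ^ n))"
proof -
  have "coprime (int p) e" using assms by (intro prime_imp_coprime) simp_all
  then show ?thesis by (simp add: coprime_commute)
qed

context group
begin

lemma word_eval_closed: "\<forall>j. g j \<in> carrier G \<Longrightarrow> word_eval G g w \<in> carrier G"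
  by (induction w) auto

lemma word_eval_one [simp]: "word_eval G (\<lambda>_. \<one>) w = \<one>"
  by (induction w) auto

lemma letter_eq_int_pow:
  "x \<in> carrier G \<Longrightarrow> (if b then x else inv x) = x [^] (if b then 1 else -1 :: int)"
  using int_pow_neg[of x 1] by simp

lemma word_eval_single_variable:
  assumes x: "x \<in> carrier G"
  shows "word_eval G (\<lambda>j. if j = i then x else \<one>) w = x [^] exponent_sum i w"
proof (induction w)
  case (Cons a w)
  obtain j b where "a = (j, b)" by fastforce
  with Cons x show ?case
    by (cases "j = i") (simp_all add: letter_eq_int_pow int_pow_mult)
qed simp

lemma word_rangeI: "\<forall>j. g j \<in> carrier G \<Longrightarrow> word_eval G g w \<in> word_range G w"
  by (auto simp: word_range_def)

lemma word_image_eq_word_range: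
  assumes w: "w \<in> free_words d"
  shows "word_image G d w = word_range G w"
proof (intro equalityI subsetI)
  fix y assume "y \<in> word_image G d w"
  then obtain g where g: "g \<in> {..<d} \<rightarrow>\<^sub>E carrier G" and y: "y = word_eval G g w"
    unfolding word_image_def by blast
  have "word_eval G (\<lambda>j. if j < d then g j else \<one>) w = word_eval G g w"
    using w by (intro word_eval_cong) (auto simp: free_words_def)
  moreover have "\<forall>j. (if j < d then g j else \<one>) \<in> carrier G" using g by auto
  ultimately show "y \<in> word_range G w"
    using word_rangeI[of "\<lambda>j. if j < d then g j else \<one>" w] y by simp
next
  fix y assume "y \<in> word_range G w"
  then obtain g where g: "\<forall>j. g j \<in> carrier G" and y: "y = word_eval G g w"
    unfolding word_range_def by blast
  have "word_eval G (restrict g {..<d}) w = word_eval G g w"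
    using w by (intro word_eval_cong) (auto simp: free_words_def)
  moreover have "word_eval G (restrict g {..<d}) w \<in> word_image G d w"
    using g unfolding word_image_def by (intro CollectI exI[of _ "restrict g {..<d}"]) auto
  ultimately show "y \<in> word_image G d w" using y by simp
qed

lemma word_images_eq_range_word_range:
  "{word_image G d w | d w. d \<ge> 1 \<and> w \<in> free_words d} = range (word_range G)"
proof (intro equalityI subsetI)
  fix W assume "W \<in> {word_image G d w | d w. d \<ge> 1 \<and> w \<in> free_words d}"
  then show "W \<in> range (word_range G)" using word_image_eq_word_range by blast
next
  fix W assume "W \<in> range (word_range G)"
  then obtain w where W: "W = word_range G w" by blast
  obtain d where d: "\<forall>j \<in> insert 0 (fst ` set w). j < d"
    using finite_nat_set_iff_bounded by blast
  then have "d \<ge> 1" and "w \<in> free_words d" by (auto simp: free_words_def)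
  then show "W \<in> {word_image G d w | d w. d \<ge> 1 \<and> w \<in> free_words d}"
    using W word_image_eq_word_range by blast
qed

lemma word_range_Nil [simp]: "word_range G [] = {\<one>}"
  by (auto simp: word_range_def)

lemma word_eval_variablewise_induct:
  assumes g: "\<forall>j. g j \<in> carrier G"
    and one: "R (word_eval G (\<lambda>_. \<one>) w)"
    and upd: "\<And>g m. \<forall>j. g j \<in> carrier G \<Longrightarrow> R (word_eval G (g(m := \<one>)) w) \<Longrightarrow> R (word_eval G g w)"
  shows "R (word_eval G g w)"
proof -
  let ?trunc = "\<lambda>k j. if j < k then g j else \<one>"
  have trunc: "R (word_eval G (?trunc k) w)" for k
  proof (induction k)
    case 0
    then show ?case using one by simp
  next
    case (Suc k)
    have "(?trunc (Suc k))(k := \<one>) = ?trunc k" by auto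
    with Suc g show ?case using upd[of "?trunc (Suc k)" k] by simp
  qed
  obtain B where "\<forall>j \<in> fst ` set w. j < B"
    using finite_nat_set_iff_bounded by blast
  then have "word_eval G (?trunc B) w = word_eval G g w" by (intro word_eval_cong) force
  with trunc show ?thesis by metis
qed

lemma word_eval_changes_in_some_variable:
  assumes "\<forall>j. g j \<in> carrier G" and "word_eval G g w \<noteq> \<one>"
  obtains g' m where "\<forall>j. g' j \<in> carrier G" and "word_eval G g' w \<noteq> word_eval G (g'(m := \<one>)) w"
proof -
  have "word_eval G g w = \<one>"
    if stationary: "\<And>g' m. \<forall>j. g' j \<in> carrier G \<Longrightarrow> word_eval G g' w = word_eval G (g'(m := \<one>)) w"
    using assms(1) by (rule word_eval_variablewise_induct) (use stationary in auto)
  with assms(2) that show thesis by blast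
qed

lemma int_pow_coprime_order_inverse:
  assumes "coprime e (int (order G))"
  obtains s where "\<And>y. y \<in> carrier G \<Longrightarrow> y [^] (e * s) = y"
proof -
  obtain s t where st: "s * e + t * int (order G) = 1"
    using assms by (metis bezout_int coprime_iff_gcd_eq_1)
  have "y [^] (e * s) = y" if y: "y \<in> carrier G" for y
  proof -
    have "y [^] int (order G) = \<one>" using pow_order_eq_1[OF y] by (simp add: int_pow_int)
    then have order: "y [^] (t * int (order G)) = \<one>"
      using int_pow_pow[OF y, of "int (order G)" t] y by (simp add: mult.commute)
    have "y = y [^] (e * s + t * int (order G))" using st y by (simp add: mult.commute)
    also have "\<dots> = y [^] (e * s)" using order y by (simp add: int_pow_mult)
    finally show ?thesis by simp
  qed
  then show thesis by (rule that)
qed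

lemma mem_subgroup_if_int_pow_coprime_order:
  assumes M: "subgroup M G" and x: "x \<in> carrier G" and "x [^] e \<in> M"
    and "coprime e (int (order G))"
  shows "x \<in> M"
proof -
  obtain s where s: "\<And>y. y \<in> carrier G \<Longrightarrow> y [^] (e * s) = y"
    using int_pow_coprime_order_inverse[OF assms(4)] by blast
  have "(x [^] e) [^] s = x" using s[OF x] int_pow_pow[OF x] by simp
  then show ?thesis using subgroup_int_pow_closed[OF M assms(3), of s] by simp
qed

lemma word_range_eq_carrier:
  assumes "coprime (exponent_sum i w) (int (order G))"
  shows "word_range G w = carrier G"
proof
  show "word_range G w \<subseteq> carrier G" using word_eval_closed by (auto simp: word_range_def)
  obtain s where s: "\<And>y. y \<in> carrier G \<Longrightarrow> y [^] (exponent_sum i w * s) = y"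
    using int_pow_coprime_order_inverse[OF assms] by blast
  show "carrier G \<subseteq> word_range G w"
  proof
    fix y assume y: "y \<in> carrier G"
    have "(y [^] s) [^] exponent_sum i w = y"
      using s[OF y] int_pow_pow[OF y, of s "exponent_sum i w"] by (simp add: mult.commute)
    then have "word_eval G (\<lambda>j. if j = i then y [^] s else \<one>) w = y"
      using word_eval_single_variable[of "y [^] s" i w] y by simp
    then show "y \<in> word_range G w"
      using word_rangeI[of "\<lambda>j. if j = i then y [^] s else \<one>" w] y by simp
  qed
qed

lemma word_range_letter: "word_range G [(i, True)] = carrier G"
  by (rule word_range_eq_carrier[of i]) simp

lemma commutator_closed [simp]:
  "x \<in> carrier G \<Longrightarrow> y \<in> carrier G \<Longrightarrow> commutator G x y \<in> carrier G"
  by (simp add: commutator_def)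

lemma commutator_in_derived:
  assumes "x \<in> carrier G" and "y \<in> carrier G"
  shows "commutator G x y \<in> derived G (carrier G)"
proof -
  have "commutator G x y \<in> derived_set G (carrier G)"
    using assms by (intro UN_I[of "inv x"] UN_I[of "inv y"]) (simp_all add: commutator_def)
  then show ?thesis unfolding derived_def by (rule generate.incl)
qed

lemma exists_commutator_ne_one:
  assumes "derived G (carrier G) \<noteq> {\<one>}"
  obtains x y where "x \<in> carrier G" and "y \<in> carrier G" and "commutator G x y \<noteq> \<one>"
proof -
  have "derived G (carrier G) \<subseteq> {\<one>}"
    if trivial: "\<And>x y. x \<in> carrier G \<Longrightarrow> y \<in> carrier G \<Longrightarrow> commutator G x y = \<one>"
    unfolding derived_def
  proof (rule generate_subgroup_incl[OF subsetI triv_subgroup])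
    fix z assume "z \<in> derived_set G (carrier G)"
    then obtain x y where xy: "x \<in> carrier G" "y \<in> carrier G" and z: "z = x \<otimes> y \<otimes> inv x \<otimes> inv y"
      by blast
    then have "z = commutator G (inv x) (inv y)" by (simp add: commutator_def)
    with xy trivial show "z \<in> {\<one>}" by simp
  qed
  moreover have "\<one> \<in> derived G (carrier G)" unfolding derived_def by (rule generate.one)
  ultimately show thesis using assms that by blast
qed

lemma normal_if_derived_subset:
  assumes M: "subgroup M G" and derived: "derived G (carrier G) \<subseteq> M"
  shows "M \<lhd> G"
  unfolding normal_inv_iff
proof (intro conjI ballI)
  fix g m assume g: "g \<in> carrier G" and m: "m \<in> M"
  have mc: "m \<in> carrier G" using subgroup.mem_carrier[OF M m] .
  have "g \<otimes> m \<otimes> inv g = commutator G (inv g) (inv m) \<otimes> m"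
    using g mc by (simp add: commutator_def m_assoc)
  moreover have "commutator G (inv g) (inv m) \<in> M"
    using derived commutator_in_derived g mc by blast
  ultimately show "g \<otimes> m \<otimes> inv g \<in> M" using m subgroup.m_closed[OF M] by simp
qed (rule M)

text \<open>If \<open>x^p \<notin> M\<close>, then \<open>M\<close> (normal, as it contains \<open>G'\<close>) and \<open>x^p\<close> generate \<open>G\<close>, so
  \<open>x = m x^(p k)\<close> with \<open>m \<in> M\<close>; since \<open>1 - p k\<close> is prime to \<open>|G|\<close>, the element \<open>x\<close> is a power of
  \<open>m = x^(1 - p k)\<close> and lies in \<open>M\<close> after all.\<close>
lemma pow_prime_in_maximal_subgroup:
  assumes p: "Factorial_Ring.prime p" and order: "order G = p ^ n"
    and M: "maximal_subgroup G M" and derived: "derived G (carrier G) \<subseteq> M"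
    and x: "x \<in> carrier G"
  shows "x [^] p \<in> M"
proof -
  have subgroup: "subgroup M G" using M by (simp add: maximal_subgroup_def)
  let ?H = "M <#> generate G {x [^] p}"
  have "subgroup ?H G"
    using mult_norm_subgroup[OF normal_if_derived_subset[OF subgroup derived] generate_is_subgroup] x
    by simp
  moreover have "M \<subseteq> ?H"
  proof
    fix m assume m: "m \<in> M"
    then have "m \<otimes> \<one> \<in> ?H" using generate.one unfolding set_mult_def by blast
    then show "m \<in> ?H" using subgroup.mem_carrier[OF subgroup m] by simp
  qed
  ultimately have "?H = M \<or> ?H = carrier G" using M by (auto simp: maximal_subgroup_def)
  moreover have "x [^] p \<in> ?H"
    using subgroup.one_closed[OF subgroup] generate.incl[of "x [^] p" "{x [^] p}" G] x
    by (force simp: set_mult_def)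
  moreover have "x \<in> M" if "?H = carrier G"
  proof -
    have "x \<in> ?H" using that x by simp
    then obtain m y where m: "m \<in> M" and y: "y \<in> generate G {x [^] p}" and xmy: "x = m \<otimes> y"
      unfolding set_mult_def by blast
    have mc: "m \<in> carrier G" using subgroup.mem_carrier[OF subgroup m] .
    obtain k where k: "y = (x [^] p) [^] (k::int)" using y generate_pow[of "x [^] p"] x by auto
    have "y \<in> carrier G" using k x by simp
    then have "m = x \<otimes> inv y" using xmy mc by (simp add: m_assoc)
    also have "y = x [^] (int p * k)" using k int_pow_pow[OF x] by (simp flip: int_pow_int)
    also have "x \<otimes> inv (x [^] (int p * k)) = x [^] (1 - int p * k)" using x by (simp add: int_pow_diff)
    finally have "x [^] (1 - int p * k) \<in> M" using m by simp
    moreover have "\<not> int p dvd 1 - int p * k"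
    proof
      assume "int p dvd 1 - int p * k"
      then have "int p dvd (1 - int p * k) + int p * k" by (rule dvd_add) simp
      then show False using p by (simp add: prime_nat_iff)
    qed
    then have "coprime (1 - int p * k) (int (order G))"
      using coprime_prime_power_if_not_dvd[OF p] order by simp
    ultimately show "x \<in> M" by (rule mem_subgroup_if_int_pow_coprime_order[OF subgroup x])
  qed
  ultimately show ?thesis
    using subgroup_int_pow_closed[OF subgroup, of x "int p"] by (auto simp: int_pow_int)
qed

lemma pow_prime_in_frattini:
  assumes "Factorial_Ring.prime p" and "order G = p ^ n"
    and "derived G (carrier G) \<subseteq> frattini G" and "x \<in> carrier G"
  shows "x [^] p \<in> frattini G"
  unfolding frattini_def
proof (intro CollectI conjI allI impI)
  show "x [^] p \<in> carrier G" using assms(4) by simp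
  fix M assume M: "maximal_subgroup G M"
  then have "derived G (carrier G) \<subseteq> M" using assms(3) by (auto simp: frattini_def)
  then show "x [^] p \<in> M" by (rule pow_prime_in_maximal_subgroup[OF assms(1,2) M _ assms(4)])
qed

lemma generate_eq_prime_order_subgroup:
  assumes Z: "subgroup Z G" and card: "card Z = p" and p: "Factorial_Ring.prime p"
    and a: "a \<in> Z" "a \<noteq> \<one>"
  shows "generate G {a} = Z"
proof -
  let ?A = "generate G {a}"
  have AZ: "?A \<subseteq> Z" using generate_subgroup_incl[OF _ Z] a by simp
  interpret Z: group "G\<lparr>carrier := Z\<rparr>" by (rule subgroup_imp_group[OF Z])
  have "a \<in> carrier G" using subgroup.mem_carrier[OF Z a(1)] .
  then have "subgroup ?A (G\<lparr>carrier := Z\<rparr>)"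
    using subgroup_incl[OF generate_is_subgroup Z AZ] by simp
  then have "card (rcosets\<^bsub>G\<lparr>carrier := Z\<rparr>\<^esub> ?A) * card ?A = p"
    using Z.lagrange card by (simp add: order_def)
  then have "card ?A dvd p" by (metis dvd_triv_right)
  moreover have finite: "finite Z" using card prime_gt_0_nat[OF p] by (intro card_ge_0_finite) simp
  then have "card {\<one>, a} \<le> card ?A"
    using AZ generate.one generate.incl[of a "{a}"] by (intro card_mono) (auto intro: finite_subset)
  ultimately have "card ?A = p" using a(2) p by (auto simp: prime_nat_iff)
  then show ?thesis using card_subset_eq[OF finite AZ] card by simp
qed

lemma mult_inv_cancel_left [simp]: "x \<in> carrier G \<Longrightarrow> y \<in> carrier G \<Longrightarrow> x \<otimes> (inv x \<otimes> y) = y"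
  by (simp flip: m_assoc)

lemma commutator_swap:
  "x \<in> carrier G \<Longrightarrow> y \<in> carrier G \<Longrightarrow> x \<otimes> y = y \<otimes> x \<otimes> commutator G x y"
  by (simp add: commutator_def m_assoc)

lemma inv_commutator:
  "x \<in> carrier G \<Longrightarrow> y \<in> carrier G \<Longrightarrow> inv (commutator G x y) = commutator G y x"
  by (simp add: commutator_def m_assoc inv_mult_group)

end

locale class_two_group = group +
  assumes commutator_central:
    "\<lbrakk>x \<in> carrier G; y \<in> carrier G; z \<in> carrier G\<rbrakk>
       \<Longrightarrow> commutator G x y \<otimes> z = z \<otimes> commutator G x y"
begin

lemma commutator_mult_right:
  assumes x: "x \<in> carrier G" and y: "y \<in> carrier G" and z: "z \<in> carrier G"
  shows "commutator G x (y \<otimes> z) = commutator G x y \<otimes> commutator G x z"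
proof -
  have "commutator G x (y \<otimes> z) = inv x \<otimes> inv z \<otimes> (inv y \<otimes> x \<otimes> y) \<otimes> z"
    using x y z by (simp add: commutator_def m_assoc inv_mult_group)
  also have "inv y \<otimes> x \<otimes> y = x \<otimes> commutator G x y"
    using x y by (simp add: commutator_def m_assoc)
  also have "inv x \<otimes> inv z \<otimes> (x \<otimes> commutator G x y) \<otimes> z
      = inv x \<otimes> inv z \<otimes> x \<otimes> (commutator G x y \<otimes> z)"
    using x y z by (simp add: m_assoc)
  also have "\<dots> = commutator G x z \<otimes> commutator G x y"
    using commutator_central[OF x y z] x y z by (simp add: commutator_def m_assoc)
  also have "\<dots> = commutator G x y \<otimes> commutator G x z"
    using commutator_central[OF x y] x z by simp
  finally show ?thesis .
qed

lemma commutator_mult_left: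
  assumes x: "x \<in> carrier G" and y: "y \<in> carrier G" and z: "z \<in> carrier G"
  shows "commutator G (x \<otimes> y) z = commutator G x z \<otimes> commutator G y z"
proof -
  have "commutator G (x \<otimes> y) z = inv (commutator G z (x \<otimes> y))"
    using x y z by (simp add: inv_commutator)
  also have "\<dots> = inv (commutator G z x \<otimes> commutator G z y)"
    using x y z by (simp add: commutator_mult_right)
  also have "\<dots> = commutator G y z \<otimes> commutator G x z"
    using x y z by (simp add: inv_mult_group inv_commutator)
  also have "\<dots> = commutator G x z \<otimes> commutator G y z"
    using commutator_central[OF y z] x z by simp
  finally show ?thesis .
qed

lemma commutator_int_pow_left:
  assumes "x \<in> carrier G" and "y \<in> carrier G"
  shows "commutator G (x [^] k) y = commutator G x y [^] (k::int)"
proof -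
  have "(\<lambda>x. commutator G x y) \<in> hom G G"
    using assms by (intro homI) (simp_all add: commutator_mult_left)
  then show ?thesis using hom_int_pow[OF _ assms(1) is_group is_group] by blast
qed

lemma commutator_int_pow_right:
  assumes "x \<in> carrier G" and "y \<in> carrier G"
  shows "commutator G x (y [^] k) = commutator G x y [^] (k::int)"
proof -
  have "(\<lambda>y. commutator G x y) \<in> hom G G"
    using assms by (intro homI) (simp_all add: commutator_mult_right)
  then show ?thesis using hom_int_pow[OF _ assms(2) is_group is_group] by blast
qed

lemma int_pow_mult_swap:
  assumes "x \<in> carrier G" and "u \<in> carrier G"
  shows "x [^] k \<otimes> u = u \<otimes> x [^] k \<otimes> commutator G x (u [^] (k::int))"
  using commutator_swap[of "x [^] k" u] assms
  by (simp add: commutator_int_pow_left commutator_int_pow_right)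

text \<open>A letter \<open>x^e\<close> in front of \<open>U x^S [x, T]\<close> is moved past \<open>U\<close> at the cost of the central
  factor \<open>[x, U^e]\<close>, giving \<open>U x^(e + S) [x, U^e T]\<close>.\<close>
lemma word_eval_affine_in_variable:
  assumes h: "\<forall>j. h j \<in> carrier G"
  shows "\<exists>U\<in>carrier G. \<exists>T\<in>carrier G. \<forall>x\<in>carrier G.
           word_eval G (h(i := x)) w = U \<otimes> x [^] exponent_sum i w \<otimes> commutator G x T"
proof (induction w)
  case Nil
  show ?case by (intro bexI[of _ \<one>] ballI) (simp_all add: commutator_def)
next
  case (Cons a w)
  then obtain U T where U: "U \<in> carrier G" and T: "T \<in> carrier G"
    and IH: "\<And>x. x \<in> carrier G \<Longrightarrow>
               word_eval G (h(i := x)) w = U \<otimes> x [^] exponent_sum i w \<otimes> commutator G x T"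
    by blast
  obtain j b where a: "a = (j, b)" by fastforce
  let ?e = "if b then 1 else -1 :: int" and ?S = "exponent_sum i w"
  show ?case
  proof (cases "j = i")
    case True
    have "word_eval G (h(i := x)) (a # w) = U \<otimes> x [^] (?e + ?S) \<otimes> commutator G x (U [^] ?e \<otimes> T)"
      if x: "x \<in> carrier G" for x
    proof -
      have "word_eval G (h(i := x)) (a # w) = x [^] ?e \<otimes> (U \<otimes> x [^] ?S \<otimes> commutator G x T)"
        using a True IH[OF x] x by (simp add: letter_eq_int_pow)
      also have "\<dots> = U \<otimes> x [^] ?e \<otimes> (commutator G x (U [^] ?e) \<otimes> x [^] ?S) \<otimes> commutator G x T"
        using int_pow_mult_swap[OF x U] x U T by (simp flip: m_assoc)
      also have "\<dots> = U \<otimes> (x [^] ?e \<otimes> x [^] ?S) \<otimes> (commutator G x (U [^] ?e) \<otimes> commutator G x T)"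
        using commutator_central[of x "U [^] ?e" "x [^] ?S"] x U T by (simp add: m_assoc)
      also have "\<dots> = U \<otimes> x [^] (?e + ?S) \<otimes> commutator G x (U [^] ?e \<otimes> T)"
        using x U T by (simp add: int_pow_mult commutator_mult_right)
      finally show ?thesis .
    qed
    moreover have "exponent_sum i (a # w) = ?e + ?S" using a True by simp
    ultimately show ?thesis using U T by (metis int_pow_closed m_closed)
  next
    case False
    let ?l = "h j [^] ?e"
    have "word_eval G (h(i := x)) (a # w) = ?l \<otimes> U \<otimes> x [^] ?S \<otimes> commutator G x T"
      if x: "x \<in> carrier G" for x
      using a False IH[OF x] h x U T by (simp add: letter_eq_int_pow m_assoc)
    moreover have "exponent_sum i (a # w) = ?S" using a False by simp
    ultimately show ?thesis using h U T by (metis int_pow_closed m_closed)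
  qed
qed

lemma word_eval_fun_upd:
  assumes "\<forall>j. g j \<in> carrier G"
  obtains T where "T \<in> carrier G"
    and "\<And>x. x \<in> carrier G \<Longrightarrow> word_eval G (g(m := x)) w
           = word_eval G (g(m := \<one>)) w \<otimes> x [^] exponent_sum m w \<otimes> commutator G x T"
proof -
  obtain U T where U: "U \<in> carrier G" and T: "T \<in> carrier G"
    and affine: "\<forall>x\<in>carrier G.
                   word_eval G (g(m := x)) w = U \<otimes> x [^] exponent_sum m w \<otimes> commutator G x T"
    using word_eval_affine_in_variable[OF assms, of m w] by blast
  have "commutator G \<one> T = \<one>" using T by (simp add: commutator_def)
  then have "word_eval G (g(m := \<one>)) w = U" using affine U by simp
  with affine T show thesis by (intro that) auto
qed

end

locale elementary_central_extension = group +
  fixes p :: nat and Z :: "'a set"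
  assumes prime_p: "Factorial_Ring.prime p"
    and subgroup_Z: "subgroup Z G"
    and card_Z: "card Z = p"
    and Z_central: "\<lbrakk>z \<in> Z; x \<in> carrier G\<rbrakk> \<Longrightarrow> z \<otimes> x = x \<otimes> z"
    and commutator_in_Z: "\<lbrakk>x \<in> carrier G; y \<in> carrier G\<rbrakk> \<Longrightarrow> commutator G x y \<in> Z"
    and pow_prime_in_Z: "x \<in> carrier G \<Longrightarrow> x [^] p \<in> Z"

sublocale elementary_central_extension \<subseteq> class_two_group
  by unfold_locales (simp add: Z_central commutator_in_Z)

context elementary_central_extension
begin

lemma int_pow_in_Z:
  assumes "x \<in> carrier G" and "int p dvd k"
  shows "x [^] k \<in> Z"
proof -
  obtain l where "k = int p * l" using assms(2) by blast
  then have "x [^] k = (x [^] p) [^] l" using int_pow_pow[OF assms(1), of "int p" l] by (simp add: int_pow_int)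
  then show ?thesis using subgroup_int_pow_closed[OF subgroup_Z pow_prime_in_Z[OF assms(1)]] by simp
qed

lemma word_eval_in_Z:
  assumes dvd: "\<forall>i. int p dvd exponent_sum i w" and g: "\<forall>j. g j \<in> carrier G"
  shows "word_eval G g w \<in> Z"
  using g
proof (rule word_eval_variablewise_induct)
  show "word_eval G (\<lambda>_. \<one>) w \<in> Z" using subgroup.one_closed[OF subgroup_Z] by simp
next
  fix g m assume g: "\<forall>j. g j \<in> carrier G" and IH: "word_eval G (g(m := \<one>)) w \<in> Z"
  obtain T where T: "T \<in> carrier G"
    and upd: "\<And>x. x \<in> carrier G \<Longrightarrow> word_eval G (g(m := x)) w
                = word_eval G (g(m := \<one>)) w \<otimes> x [^] exponent_sum m w \<otimes> commutator G x T"
    using word_eval_fun_upd[OF g] by blast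
  have "word_eval G g w = word_eval G (g(m := \<one>)) w \<otimes> g m [^] exponent_sum m w \<otimes> commutator G (g m) T"
    using upd[of "g m"] g by simp
  then show "word_eval G g w \<in> Z"
    using IH int_pow_in_Z dvd commutator_in_Z T g subgroup.m_closed[OF subgroup_Z] by simp
qed

lemma int_pow_commutator_int_pow:
  assumes "int p dvd e" and x: "x \<in> carrier G" and T: "T \<in> carrier G"
  shows "(x [^] k) [^] e \<otimes> commutator G (x [^] k) T = (x [^] e \<otimes> commutator G x T) [^] (k::int)"
proof -
  have central: "x [^] e \<otimes> commutator G x T = commutator G x T \<otimes> x [^] e"
    using Z_central[OF int_pow_in_Z] assms by simp
  have "(x [^] e \<otimes> commutator G x T) [^] k = (x [^] e) [^] k \<otimes> commutator G x T [^] k"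
    using int_pow_mult_distrib[OF central] x T by simp
  then show ?thesis using x T by (simp add: int_pow_pow mult.commute commutator_int_pow_left)
qed

text \<open>Along the powers \<open>x^k\<close> of the changed variable the word takes the values \<open>U a^k\<close>, with
  \<open>U \<in> Z\<close> its value at \<open>\<one>\<close> and \<open>a \<noteq> \<one>\<close> in \<open>Z\<close>; as \<open>Z\<close> has prime order, \<open>a\<close> generates it.\<close>
lemma Z_subset_word_range:
  assumes dvd: "\<forall>i. int p dvd exponent_sum i w" and g: "\<forall>j. g j \<in> carrier G"
    and changes: "word_eval G g w \<noteq> word_eval G (g(m := \<one>)) w"
  shows "Z \<subseteq> word_range G w"
proof
  fix z assume z: "z \<in> Z"
  obtain T where T: "T \<in> carrier G"
    and upd: "\<And>x. x \<in> carrier G \<Longrightarrow> word_eval G (g(m := x)) w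
                = word_eval G (g(m := \<one>)) w \<otimes> x [^] exponent_sum m w \<otimes> commutator G x T"
    using word_eval_fun_upd[OF g] by blast
  define U where "U = word_eval G (g(m := \<one>)) w"
  define x where "x = g m"
  define a where "a = x [^] exponent_sum m w \<otimes> commutator G x T"
  have x: "x \<in> carrier G" using g by (simp add: x_def)
  have U: "U \<in> Z" using word_eval_in_Z[OF dvd] g by (simp add: U_def)
  have a: "a \<in> Z"
    using int_pow_in_Z dvd commutator_in_Z T x subgroup.m_closed[OF subgroup_Z] by (simp add: a_def)
  have Uc: "U \<in> carrier G" and ac: "a \<in> carrier G" using U a subgroup.mem_carrier[OF subgroup_Z] by auto
  have upd_pow: "word_eval G (g(m := x [^] k)) w = U \<otimes> a [^] (k::int)" for k
    using upd[of "x [^] k"] int_pow_commutator_int_pow[of _ x T k] dvd x T Uc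
    by (simp add: U_def a_def m_assoc)
  have "a \<noteq> \<one>" using changes upd_pow[of 1] x Uc by (auto simp: x_def U_def)
  then have "generate G {a} = Z" using generate_eq_prime_order_subgroup[OF subgroup_Z card_Z prime_p a] by simp
  moreover have "inv U \<otimes> z \<in> Z"
    using U z subgroup.m_closed[OF subgroup_Z] subgroup.m_inv_closed[OF subgroup_Z] by simp
  ultimately obtain k where k: "inv U \<otimes> z = a [^] (k::int)" using generate_pow[OF ac] by auto
  then have "word_eval G (g(m := x [^] k)) w = z"
    using upd_pow[of k] Uc subgroup.mem_carrier[OF subgroup_Z z] by (simp flip: k)
  then show "z \<in> word_range G w"
    using word_rangeI[of "g(m := x [^] k)" w] g x by simp
qed

lemma word_range_trivial_or_Z:
  assumes dvd: "\<forall>i. int p dvd exponent_sum i w"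
  shows "word_range G w = {\<one>} \<or> word_range G w = Z"
proof (cases "\<forall>g. (\<forall>j. g j \<in> carrier G) \<longrightarrow> word_eval G g w = \<one>")
  case True
  then show ?thesis using word_rangeI[of "\<lambda>_. \<one>" w] by (auto simp: word_range_def)
next
  case False
  then obtain g where "\<forall>j. g j \<in> carrier G" and "word_eval G g w \<noteq> \<one>" by blast
  then obtain g' m where "\<forall>j. g' j \<in> carrier G" and "word_eval G g' w \<noteq> word_eval G (g'(m := \<one>)) w"
    by (rule word_eval_changes_in_some_variable)
  then have "Z \<subseteq> word_range G w" using Z_subset_word_range[OF dvd] by blast
  moreover have "word_range G w \<subseteq> Z" using word_eval_in_Z[OF dvd] by (auto simp: word_range_def)
  ultimately show ?thesis by blast
qed

lemma word_range_cases:
  assumes "order G = p ^ n"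
  shows "word_range G w \<in> {{\<one>}, Z, carrier G}"
proof (cases "\<forall>i. int p dvd exponent_sum i w")
  case True
  then show ?thesis using word_range_trivial_or_Z by blast
next
  case False
  then obtain i where "\<not> int p dvd exponent_sum i w" by blast
  then have "coprime (exponent_sum i w) (int (order G))"
    using coprime_prime_power_if_not_dvd[OF prime_p] assms by simp
  then show ?thesis using word_range_eq_carrier by blast
qed

lemma word_range_commutator_word:
  assumes "x \<in> carrier G" and "y \<in> carrier G" and "commutator G x y \<noteq> \<one>"
  shows "word_range G commutator_word = Z"
proof -
  have "word_eval G (\<lambda>j. if j = 0 then x else y) commutator_word = commutator G x y"
    using assms by (simp add: commutator_word_def commutator_def m_assoc)
  then have "commutator G x y \<in> word_range G commutator_word"
    using word_rangeI[of "\<lambda>j. if j = 0 then x else y" commutator_word] assms by simp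
  moreover have "exponent_sum i commutator_word = 0" for i
    by (cases "i = 0"; cases "i = 1") (simp_all add: commutator_word_def)
  then have "word_range G commutator_word = {\<one>} \<or> word_range G commutator_word = Z"
    by (intro word_range_trivial_or_Z) simp
  ultimately show ?thesis using assms(3) by blast
qed

end

lemma (in group) extraspecial_elementary_central_extension:
  assumes p: "Factorial_Ring.prime p" and G: "extraspecial_p_group p G"
  shows "elementary_central_extension G p (group_center G)"
proof -
  obtain n where order: "order G = p ^ n"
    and center: "group_center G = derived G (carrier G)"
    and frattini: "derived G (carrier G) = frattini G"
    and elementary: "elementary_abelian p G (group_center G)"
    and card: "card (group_center G) = p"
    using G unfolding extraspecial_p_group_def special_p_group_def p_group_def by blast
  show ?thesis
  proof (intro elementary_central_extension.intro elementary_central_extension_axioms.intro)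
    show "group G" by (rule is_group)
    show "subgroup (group_center G) G" using elementary by (simp add: elementary_abelian_def)
  next
    fix z x assume "z \<in> group_center G" and "x \<in> carrier G"
    then show "z \<otimes> x = x \<otimes> z" by (simp add: group_center_def)
  next
    fix x y assume "x \<in> carrier G" and "y \<in> carrier G"
    then show "commutator G x y \<in> group_center G" using commutator_in_derived center by simp
  next
    fix x assume "x \<in> carrier G"
    then show "x [^] p \<in> group_center G"
      using pow_prime_in_frattini[OF p order] center frattini by simp
  qed (fact p card)+
qed

theorem theorem4p9:
  fixes G :: "('a, 'b) monoid_scheme" and p :: nat
  assumes "Factorial_Ring.prime p" and "group G" and "extraspecial_p_group p G"
  shows "{word_image G d w | d w. d \<ge> 1 \<and> w \<in> free_words d}
           = {{\<one>\<^bsub>G\<^esub>}, group_center G, carrier G}"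
proof -
  interpret group G by fact
  interpret elementary_central_extension G p "group_center G"
    using assms(1,3) by (rule extraspecial_elementary_central_extension)
  obtain n where order: "order G = p ^ n" and center: "group_center G = derived G (carrier G)"
    using assms(3) unfolding extraspecial_p_group_def special_p_group_def p_group_def by blast
  have "derived G (carrier G) \<noteq> {\<one>\<^bsub>G\<^esub>}"
    using card_Z center prime_gt_1_nat[OF prime_p] by (intro notI) simp
  then obtain x y where "x \<in> carrier G" "y \<in> carrier G" "commutator G x y \<noteq> \<one>\<^bsub>G\<^esub>"
    by (rule exists_commutator_ne_one)
  then have "word_range G commutator_word = group_center G" by (rule word_range_commutator_word)
  then have "{{\<one>\<^bsub>G\<^esub>}, group_center G, carrier G} \<subseteq> range (word_range G)"
    using rangeI[of "word_range G" "[]"] rangeI[of "word_range G" "[(0, True)]"]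
      rangeI[of "word_range G" commutator_word] by (simp add: word_range_letter)
  moreover have "range (word_range G) \<subseteq> {{\<one>\<^bsub>G\<^esub>}, group_center G, carrier G}"
    using word_range_cases[OF order] by blast
  ultimately show ?thesis unfolding word_images_eq_range_word_range by blast
qed

end
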